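(* Let $R$ be a commutative semiring and $\varphi:R\to U$ an m-supervaluation which is tangibly surjective, i.e. $\mathcal T(U)\subset\varphi(R)$. Let $N:=\varphi(R)$ (a submonoid of $U$ containing $\mathcal T(U)\cup\{0\}$), $M:=eU$, and let $\tilde U(N)$ be the unfolding of $U$ along $N$ described below. (i) The map $\tilde\varphi:R\to\tilde U(N)$, $a\mapsto\widetilde{\varphi(a)}$, is a tangible m-supervaluation. (ii) If $\varphi':R\to U'$ is a tangible m-supervaluation dominating $\varphi$, then $\varphi'$ dominates $\tilde\varphi$.
   Context: A supertropical monoid is a commutative monoid $U$ with absorbing $0$, idempotent $e$ with $ex=0\Rightarrow x=0$, and a total order on $M:=eU$ compatible with multiplication, with $0$ least, making $M$ a bipotent semiring (addition $=\max$). $\mathcal T(U):=U\setminus eU$. An m-supervaluation is a map $\varphi:R\to U$ with $\varphi(0)=0$, $\varphi(1)=1$, $\varphi(ab)=\varphi(a)\varphi(b)$, $e\varphi(a+b)\le\max(e\varphi(a),e\varphi(b))$; it is tangible if $\varphi(R)\subset\mathcal T(U)\cup\{0\}$. For m-supervaluations $\varphi:R\to U$, $\psi:R\to V$, $\varphi$ dominates $\psi$ if for all $a,b\in R$: $\varphi(a)=\varphi(b)\Rightarrow\psi(a)=\psi(b)$; $e\varphi(a)\le e\varphi(b)\Rightarrow e\psi(a)\le e\psi(b)$; $\varphi(a)\in eU\Rightarrow\psi(a)\in eV$. Unfolding: let $\tilde N=\{\tilde x:x\in N\}$ be a copy of the monoid $N$ (with $\tilde x\tilde y=\widetilde{xy}$).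 $\tilde U(N)$ is the set $\tilde N\cup M$ with $\tilde N\cap M=\{0\}$ (identifying $\tilde 0=0$), multiplication $\tilde x\cdot\tilde y=\widetilde{xy}$, $\tilde x\cdot y=(ex)y$ for $y\in M$, and the product of $M$ on $M$; its unit is $\tilde 1$, its idempotent is $e=1_M$, with $e\tilde U(N)=M$ carrying the order of $M$. Thus $\mathcal T(\tilde U(N))=\tilde N\setminus\{0\}$, and $\tilde x$ is called the tangible lift of $x\in N$. *)

theory Defs
  imports Main
begin

record 'u stm =
  sm_carrier :: "'u set"
  sm_mult :: "'u \<Rightarrow> 'u \<Rightarrow> 'u"
  sm_one :: "'u"
  sm_zero :: "'u"
  sm_e :: "'u"
  sm_le :: "'u \<Rightarrow> 'u \<Rightarrow> bool"

definition sm_M :: "'u stm \<Rightarrow> 'u set" where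
  "sm_M U = (\<lambda>x. sm_mult U (sm_e U) x) ` sm_carrier U"

definition sm_T :: "'u stm \<Rightarrow> 'u set" where
  "sm_T U = sm_carrier U - sm_M U"

definition sm_max :: "'u stm \<Rightarrow> 'u \<Rightarrow> 'u \<Rightarrow> 'u" where
  "sm_max U x y = (if sm_le U x y then y else x)"

definition supertropical_monoid :: "'u stm \<Rightarrow> bool" where
  "supertropical_monoid U \<longleftrightarrow>
     (let C = sm_carrier U; m = sm_mult U; one = sm_one U; z = sm_zero U;
          e = sm_e U; le = sm_le U; M = sm_M U in
     one \<in> C \<and> z \<in> C \<and> e \<in> C \<and>
     (\<forall>x\<in>C. \<forall>y\<in>C. m x y \<in> C) \<and>
     (\<forall>x\<in>C. \<forall>y\<in>C. \<forall>w\<in>C. m (m x y) w = m x (m y w)) \<and>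
     (\<forall>x\<in>C. \<forall>y\<in>C. m x y = m y x) \<and>
     (\<forall>x\<in>C. m one x = x) \<and>
     (\<forall>x\<in>C. m z x = z) \<and>
     m e e = e \<and>
     (\<forall>x\<in>C. m e x = z \<longrightarrow> x = z) \<and>
     (\<forall>x\<in>M. le x x) \<and>
     (\<forall>x\<in>M. \<forall>y\<in>M. le x y \<and> le y x \<longrightarrow> x = y) \<and>
     (\<forall>x\<in>M. \<forall>y\<in>M. \<forall>w\<in>M. le x y \<and> le y w \<longrightarrow> le x w) \<and>
     (\<forall>x\<in>M. \<forall>y\<in>M. le x y \<or> le y x) \<and>
     (\<forall>x\<in>M. \<forall>y\<in>M. \<forall>w\<in>M. le x y \<longrightarrow> le (m x w) (m y w)) \<and>
     (\<forall>x\<in>M. le z x))"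

definition m_supervaluation :: "('a::comm_semiring_1 \<Rightarrow> 'u) \<Rightarrow> 'u stm \<Rightarrow> bool" where
  "m_supervaluation \<phi> U \<longleftrightarrow>
     (\<forall>a. \<phi> a \<in> sm_carrier U) \<and>
     \<phi> 0 = sm_zero U \<and> \<phi> 1 = sm_one U \<and>
     (\<forall>a b. \<phi> (a * b) = sm_mult U (\<phi> a) (\<phi> b)) \<and>
     (\<forall>a b. sm_le U (sm_mult U (sm_e U) (\<phi> (a + b)))
               (sm_max U (sm_mult U (sm_e U) (\<phi> a)) (sm_mult U (sm_e U) (\<phi> b))))"

definition tangible_sv :: "('a \<Rightarrow> 'u) \<Rightarrow> 'u stm \<Rightarrow> bool" where
  "tangible_sv \<phi> U \<longleftrightarrow> range \<phi> \<subseteq> sm_T U \<union> {sm_zero U}"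

definition tangibly_surjective :: "('a \<Rightarrow> 'u) \<Rightarrow> 'u stm \<Rightarrow> bool" where
  "tangibly_surjective \<phi> U \<longleftrightarrow> sm_T U \<subseteq> range \<phi>"

text \<open>dominates \<phi> U \<psi> V: \<phi> : R \<rightarrow> U dominates \<psi> : R \<rightarrow> V.\<close>
definition dominates :: "('a \<Rightarrow> 'u) \<Rightarrow> 'u stm \<Rightarrow> ('a \<Rightarrow> 'v) \<Rightarrow> 'v stm \<Rightarrow> bool" where
  "dominates \<phi> U \<psi> V \<longleftrightarrow>
     (\<forall>a b. \<phi> a = \<phi> b \<longrightarrow> \<psi> a = \<psi> b) \<and>
     (\<forall>a b. sm_le U (sm_mult U (sm_e U) (\<phi> a)) (sm_mult U (sm_e U) (\<phi> b)) \<longrightarrow>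
            sm_le V (sm_mult V (sm_e V) (\<psi> a)) (sm_mult V (sm_e V) (\<psi> b))) \<and>
     (\<forall>a. \<phi> a \<in> sm_M U \<longrightarrow> \<psi> a \<in> sm_M V)"

text \<open>Unfolding the unfold_stm U(N): elements are Inl x (the tangible lift of x \<in> N, x \<noteq> 0) and
  Inr y (y \<in> M); the tangible lift of 0 is identified with Inr 0.\<close>

definition tlift :: "'u stm \<Rightarrow> 'u \<Rightarrow> 'u + 'u" where
  "tlift U x = (if x = sm_zero U then Inr (sm_zero U) else Inl x)"

fun unf_mult :: "'u stm \<Rightarrow> 'u + 'u \<Rightarrow> 'u + 'u \<Rightarrow> 'u + 'u" where
  "unf_mult U (Inl x) (Inl y) = tlift U (sm_mult U x y)"
| "unf_mult U (Inl x) (Inr y) = Inr (sm_mult U (sm_mult U (sm_e U) x) y)"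
| "unf_mult U (Inr x) (Inl y) = Inr (sm_mult U x (sm_mult U (sm_e U) y))"
| "unf_mult U (Inr x) (Inr y) = Inr (sm_mult U x y)"

fun unf_le :: "'u stm \<Rightarrow> 'u + 'u \<Rightarrow> 'u + 'u \<Rightarrow> bool" where
  "unf_le U (Inr x) (Inr y) = sm_le U x y"
| "unf_le U _ _ = False"

definition unfold_stm :: "'u stm \<Rightarrow> 'u set \<Rightarrow> ('u + 'u) stm" where
  "unfold_stm U N =
     \<lparr> sm_carrier = tlift U ` N \<union> Inr ` sm_M U,
       sm_mult = unf_mult U,
       sm_one = tlift U (sm_one U),
       sm_zero = Inr (sm_zero U),
       sm_e = Inr (sm_e U),
       sm_le = unf_le U \<rparr>"

end

theory Submission
  imports Defs
begin

text \<open>The unfolding keeps the ghost part M and the ordering of U and only replaces the tangible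
  values by formal copies. Multiplying a lift by e therefore lands back in M, exactly where e
  sends the original value, so the strong triangle inequality and the comparisons of ghost
  values carry over verbatim. All ghosts of the unfolding are images of Inr, so lifts of nonzero
  values are tangible. For dominance, the only new requirement is that ghost values of a tangible
  \<phi>' be ghost in the unfolding; but such values are 0, and 0 lifts to a ghost.\<close>

lemma supertropical_monoidD:
  assumes "supertropical_monoid U"
  shows sm_e_in_carrier: "sm_e U \<in> sm_carrier U"
    and sm_zero_in_carrier: "sm_zero U \<in> sm_carrier U"
    and sm_mult_closed: "\<And>x y. x \<in> sm_carrier U \<Longrightarrow> y \<in> sm_carrier U \<Longrightarrow> sm_mult U x y \<in> sm_carrier U"
    and sm_mult_assoc: "\<And>x y w. x \<in> sm_carrier U \<Longrightarrow> y \<in> sm_carrier U \<Longrightarrow> w \<in> sm_carrier U \<Longrightarrow>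
           sm_mult U (sm_mult U x y) w = sm_mult U x (sm_mult U y w)"
    and sm_mult_commute: "\<And>x y. x \<in> sm_carrier U \<Longrightarrow> y \<in> sm_carrier U \<Longrightarrow> sm_mult U x y = sm_mult U y x"
    and sm_zero_mult: "\<And>x. x \<in> sm_carrier U \<Longrightarrow> sm_mult U (sm_zero U) x = sm_zero U"
    and sm_e_idem: "sm_mult U (sm_e U) (sm_e U) = sm_e U"
  using assms unfolding supertropical_monoid_def Let_def by (auto simp only:)

lemma sm_mult_zero:
  assumes "supertropical_monoid U" "x \<in> sm_carrier U"
  shows "sm_mult U x (sm_zero U) = sm_zero U"
  using sm_mult_commute[OF assms(1) assms(2) sm_zero_in_carrier[OF assms(1)]] sm_zero_mult[OF assms]
  by simp

lemma sm_zero_in_M: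
  assumes "supertropical_monoid U"
  shows "sm_zero U \<in> sm_M U"
  using assms sm_mult_zero[OF assms sm_e_in_carrier[OF assms]]
  unfolding sm_M_def by (metis image_eqI sm_zero_in_carrier)

lemma unfold_stm_e_mult_tlift:
  assumes "supertropical_monoid U" "x \<in> sm_carrier U"
  shows "sm_mult (unfold_stm U N) (sm_e (unfold_stm U N)) (tlift U x) = Inr (sm_mult U (sm_e U) x)"
proof (cases "x = sm_zero U")
  case True
  then show ?thesis
    using assms by (simp add: tlift_def unfold_stm_def sm_mult_zero sm_e_in_carrier)
next
  case False
  have "sm_mult U (sm_e U) (sm_mult U (sm_e U) x) = sm_mult U (sm_e U) x"
    using assms by (metis sm_e_idem sm_e_in_carrier sm_mult_assoc)
  then show ?thesis using False by (simp add: tlift_def unfold_stm_def)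
qed

lemma tlift_mult:
  assumes "supertropical_monoid U" "x \<in> sm_carrier U" "y \<in> sm_carrier U"
  shows "tlift U (sm_mult U x y) = unf_mult U (tlift U x) (tlift U y)"
proof -
  have ex: "sm_mult U (sm_e U) x \<in> sm_carrier U" and ey: "sm_mult U (sm_e U) y \<in> sm_carrier U"
    using assms by (simp_all add: sm_mult_closed sm_e_in_carrier)
  show ?thesis
    using assms ex ey
    by (cases "x = sm_zero U"; cases "y = sm_zero U")
       (simp_all add: tlift_def sm_zero_mult sm_mult_zero sm_zero_in_carrier)
qed

lemma sm_M_unfold_stm: "sm_M (unfold_stm U N) \<subseteq> range Inr"
proof
  fix z assume "z \<in> sm_M (unfold_stm U N)"
  then obtain w where "z = unf_mult U (Inr (sm_e U)) w"
    unfolding sm_M_def unfold_stm_def by auto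
  then show "z \<in> range Inr" by (cases w) auto
qed

lemma m_supervaluation_unfold:
  assumes U: "supertropical_monoid U" and \<phi>: "m_supervaluation \<phi> U" and N: "range \<phi> \<subseteq> N"
  shows "m_supervaluation (\<lambda>a. tlift U (\<phi> a)) (unfold_stm U N)"
proof -
  have carrier: "\<And>a. \<phi> a \<in> sm_carrier U"
    using \<phi> by (simp add: m_supervaluation_def)
  note e_lift = unfold_stm_e_mult_tlift[OF U carrier, of N]
  have max_Inr: "\<And>p q. sm_max (unfold_stm U N) (Inr p) (Inr q) = Inr (sm_max U p q)"
    by (simp add: sm_max_def unfold_stm_def)
  show ?thesis
    using \<phi> N carrier tlift_mult[OF U carrier carrier] sm_zero_in_M[OF U]
    unfolding m_supervaluation_def e_lift max_Inr
    by (auto simp: unfold_stm_def tlift_def)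
qed

lemma tangible_sv_unfold:
  assumes "range \<phi> \<subseteq> N"
  shows "tangible_sv (\<lambda>a. tlift U (\<phi> a)) (unfold_stm U N)"
  unfolding tangible_sv_def
proof (rule image_subsetI)
  fix a
  show "tlift U (\<phi> a) \<in> sm_T (unfold_stm U N) \<union> {sm_zero (unfold_stm U N)}"
  proof (cases "\<phi> a = sm_zero U")
    case True
    then show ?thesis by (simp add: tlift_def unfold_stm_def)
  next
    case False
    have "tlift U (\<phi> a) \<in> sm_carrier (unfold_stm U N)"
      using assms by (auto simp: unfold_stm_def)
    moreover have "tlift U (\<phi> a) \<notin> sm_M (unfold_stm U N)"
      using False sm_M_unfold_stm by (force simp: tlift_def)
    ultimately show ?thesis by (simp add: sm_T_def)
  qed
qed

lemma tangible_sv_ghost_eq_zero: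
  assumes "tangible_sv \<phi> U" "\<phi> a \<in> sm_M U"
  shows "\<phi> a = sm_zero U"
  using assms by (auto simp: tangible_sv_def sm_T_def)

lemma dominates_unfold:
  assumes U: "supertropical_monoid U" and \<phi>: "m_supervaluation \<phi> U" and N: "range \<phi> \<subseteq> N"
    and \<phi>': "m_supervaluation \<phi>' U'" "tangible_sv \<phi>' U'" and dom: "dominates \<phi>' U' \<phi> U"
  shows "dominates \<phi>' U' (\<lambda>a. tlift U (\<phi> a)) (unfold_stm U N)"
proof -
  have carrier: "\<And>a. \<phi> a \<in> sm_carrier U" and \<phi>_zero: "\<phi> 0 = sm_zero U"
    using \<phi> by (simp_all add: m_supervaluation_def)
  note e_lift = unfold_stm_e_mult_tlift[OF U carrier, of N]
  have dom_eq: "\<And>a b. \<phi>' a = \<phi>' b \<Longrightarrow> \<phi> a = \<phi> b"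
    and dom_le: "\<And>a b. sm_le U' (sm_mult U' (sm_e U') (\<phi>' a)) (sm_mult U' (sm_e U') (\<phi>' b)) \<Longrightarrow>
                   sm_le U (sm_mult U (sm_e U) (\<phi> a)) (sm_mult U (sm_e U) (\<phi> b))"
    using dom unfolding dominates_def by blast+
  have zero_ghost: "Inr (sm_zero U) \<in> sm_M (unfold_stm U N)"
  proof -
    have "Inr (sm_zero U) = sm_mult (unfold_stm U N) (sm_e (unfold_stm U N)) (tlift U (\<phi> 0))"
      using U by (simp add: \<phi>_zero tlift_def unfold_stm_def sm_mult_zero sm_e_in_carrier)
    moreover have "tlift U (\<phi> 0) \<in> sm_carrier (unfold_stm U N)"
      using N by (auto simp: unfold_stm_def)
    ultimately show ?thesis unfolding sm_M_def by blast
  qed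
  show ?thesis
    unfolding dominates_def
  proof (intro conjI allI impI)
    fix a b
    assume "\<phi>' a = \<phi>' b"
    then show "tlift U (\<phi> a) = tlift U (\<phi> b)" using dom_eq by metis
  next
    fix a b
    assume "sm_le U' (sm_mult U' (sm_e U') (\<phi>' a)) (sm_mult U' (sm_e U') (\<phi>' b))"
    then show "sm_le (unfold_stm U N) (sm_mult (unfold_stm U N) (sm_e (unfold_stm U N)) (tlift U (\<phi> a)))
        (sm_mult (unfold_stm U N) (sm_e (unfold_stm U N)) (tlift U (\<phi> b)))"
      unfolding e_lift using dom_le by (simp add: unfold_stm_def)
  next
    fix a
    assume "\<phi>' a \<in> sm_M U'"
    then have "\<phi>' a = \<phi>' 0"
      using tangible_sv_ghost_eq_zero[OF \<phi>'(2)] \<phi>'(1) by (simp add: m_supervaluation_def)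
    then have "\<phi> a = sm_zero U" using dom_eq \<phi>_zero by metis
    then show "tlift U (\<phi> a) \<in> sm_M (unfold_stm U N)"
      using zero_ghost by (simp add: tlift_def)
  qed
qed

theorem theorem7p10:
  fixes \<phi> :: "'a::comm_semiring_1 \<Rightarrow> 'u" and U :: "'u stm"
  assumes "supertropical_monoid U"
    and "m_supervaluation \<phi> U"
    and "tangibly_surjective \<phi> U"
  defines "N \<equiv> range \<phi>"
  shows "(m_supervaluation (\<lambda>a. tlift U (\<phi> a)) (unfold_stm U N)
          \<and> tangible_sv (\<lambda>a. tlift U (\<phi> a)) (unfold_stm U N))
       \<and> (\<forall>(\<phi>' :: 'a \<Rightarrow> 'v) (U' :: 'v stm).
           supertropical_monoid U' \<and> m_supervaluation \<phi>' U' \<and>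
           tangible_sv \<phi>' U' \<and> dominates \<phi>' U' \<phi> U \<longrightarrow>
           dominates \<phi>' U' (\<lambda>a. tlift U (\<phi> a)) (unfold_stm U N))"
proof -
  have N: "range \<phi> \<subseteq> N" unfolding N_def by simp
  show ?thesis
    using m_supervaluation_unfold[OF assms(1,2) N] tangible_sv_unfold[OF N]
      dominates_unfold[OF assms(1,2) N] by blast
qed

end
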